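(* Let $F$ be a positive integer, $S\in\mathrm{Sat}(F)$, and $s\in S$ with $0<s<F$ such that $\mathrm{d}_S(s)\neq\mathrm{d}_S(s')$ for all $s'\in S$ with $0<s'<s$. If $X$ is a $\mathrm{Sat}(F)$-set with $\mathrm{Sat}(F)[X]=S$, then $s\in X$.
   Context: A numerical semigroup is a subset $S\subseteq\mathbb{N}$ closed under addition, containing $0$, with $\mathbb{N}\setminus S$ finite; its Frobenius number $\mathrm{F}(S)$ is the largest integer not in $S$. For $A\subseteq\mathbb{N}$ and $a\in A$, let $\mathrm{d}_A(a)=\gcd\{x\in A\mid x\le a\}$. A numerical semigroup $S$ is saturated if $s+\mathrm{d}_S(s)\in S$ for all $s\in S\setminus\{0\}$. For a positive integer $F$, $\mathrm{Sat}(F)$ denotes the set of all saturated numerical semigroups $S$ with $\mathrm{F}(S)=F$. Let $\Delta(F+1)=\{0\}\cup\{x\in\mathbb{N}\mid x\ge F+1\}$. A set $X\subseteq\mathbb{N}$ is a $\mathrm{Sat}(F)$-set if $X\cap\Delta(F+1)=\emptyset$ and there exists $S\in\mathrm{Sat}(F)$ with $X\subseteq S$. For a $\mathrm{Sat}(F)$-set $X$, $\mathrm{Sat}(F)[X]$ denotes the intersection of all elements of $\mathrm{Sat}(F)$ containing $X$ (it is the smallest element of $\mathrm{Sat}(F)$ containing $X$). *)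

theory Defs
  imports Main
begin

definition numerical_semigroup :: "nat set \<Rightarrow> bool" where
  "numerical_semigroup S \<longleftrightarrow> 0 \<in> S \<and> (\<forall>x\<in>S. \<forall>y\<in>S. x + y \<in> S) \<and> finite (UNIV - S)"

definition frobenius :: "nat set \<Rightarrow> nat" where
  "frobenius S = Max (UNIV - S)"

definition dgcd :: "nat set \<Rightarrow> nat \<Rightarrow> nat" where
  "dgcd A a = Gcd {x \<in> A. x \<le> a}"

definition saturated :: "nat set \<Rightarrow> bool" where
  "saturated S \<longleftrightarrow> numerical_semigroup S \<and> (\<forall>s\<in>S - {0}. s + dgcd S s \<in> S)"

definition Sat :: "nat \<Rightarrow> nat set set" where
  "Sat F = {S. saturated S \<and> UNIV - S \<noteq> {} \<and> frobenius S = F}"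

definition Delta :: "nat \<Rightarrow> nat set" where
  "Delta m = {0} \<union> {x. x \<ge> m}"

definition Sat_set :: "nat \<Rightarrow> nat set \<Rightarrow> bool" where
  "Sat_set F X \<longleftrightarrow> X \<inter> Delta (F + 1) = {} \<and> (\<exists>S\<in>Sat F. X \<subseteq> S)"

definition Sat_closure :: "nat \<Rightarrow> nat set \<Rightarrow> nat set" where
  "Sat_closure F X = \<Inter> {S \<in> Sat F. X \<subseteq> S}"

end

theory Submission
  imports Defs
begin

text \<open>If \<open>s\<close> is the first element of \<open>S\<close> at which \<open>d\<^sub>S\<close> takes a new value, then
  \<open>s\<close> is not a sum of two smaller positive elements of \<open>S\<close>, nor of the form \<open>t + d\<^sub>S(t)\<close>
  with \<open>t < s\<close>: in both cases \<open>d\<^sub>S(x)\<close> would divide \<open>s\<close> for some positive \<open>x < s\<close>, forcing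
  \<open>d\<^sub>S(s) = d\<^sub>S(x)\<close>. Hence \<open>S - {s}\<close> is again a saturated numerical semigroup with Frobenius
  number \<open>F\<close>, so the smallest element of \<open>Sat(F)\<close> containing \<open>X\<close> can only be \<open>S\<close> if
  \<open>s \<in> X\<close>.\<close>

lemma dgcd_dvd: "x \<in> S \<Longrightarrow> x \<le> a \<Longrightarrow> dgcd S a dvd x"
  unfolding dgcd_def by (rule Gcd_dvd) simp

lemma dgcd_dvd_dgcd: "a \<le> b \<Longrightarrow> dgcd S b dvd dgcd S a"
  unfolding dgcd_def by (rule Gcd_greatest) (auto intro: Gcd_dvd)

lemma dgcd_dvd_dgcd_subset: "T \<subseteq> S \<Longrightarrow> dgcd S a dvd dgcd T a"
  unfolding dgcd_def by (rule Gcd_greatest) (auto intro: Gcd_dvd)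

text \<open>Otherwise the largest \<open>u \<in> S\<close> below \<open>t + m\<close> would have \<open>u + d\<^sub>S(u) \<in> S\<close> beyond
  \<open>t + m\<close>, although \<open>d\<^sub>S(u)\<close> divides the gap \<open>t + m - u\<close>.\<close>

lemma saturated_add_dvd:
  assumes sat: "saturated S" and t: "t \<in> S" "0 < t" and dvd: "dgcd S t dvd m"
  shows "t + m \<in> S"
proof (rule ccontr)
  assume notin: "t + m \<notin> S"
  define u where "u = Max {x \<in> S. x \<le> t + m}"
  have fin: "finite {x \<in> S. x \<le> t + m}" by simp
  have "u \<in> {x \<in> S. x \<le> t + m}"
    unfolding u_def using fin t by (intro Max_in) auto
  moreover have "t \<le> u"
    unfolding u_def using fin t by (intro Max_ge) auto
  ultimately have "u \<in> S" "u \<le> t + m" "t \<le> u" by auto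
  with notin have u: "u \<in> S" "u < t + m" "t \<le> u"
    by (metis le_neq_implies_less)+
  have "dgcd S u dvd t + m - u"
    using dgcd_dvd[OF t(1) u(3)] dgcd_dvd[OF u(1) order_refl]
      dvd_trans[OF dgcd_dvd_dgcd[OF u(3)] dvd]
    by (simp add: dvd_diff_nat)
  then have "dgcd S u \<le> t + m - u"
    using u(2) by (intro dvd_imp_le) auto
  moreover have "u + dgcd S u \<in> S"
    using sat u t unfolding saturated_def by auto
  ultimately have "u + dgcd S u \<in> {x \<in> S. x \<le> t + m}" using u(2) by simp
  then have "u + dgcd S u \<le> u"
    using Max_ge[OF fin] unfolding u_def by blast
  then have "dgcd S u = 0" by simp
  then show False
    using dgcd_dvd[OF u(1) order_refl] u(3) t(2) by simp
qed

text \<open>With \<open>u\<close> the largest element of \<open>S\<close> below \<open>s\<close>, \<open>d\<^sub>S(s) = gcd s d\<^sub>S(u)\<close>, and \<open>d\<^sub>S(u)\<close>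
  divides \<open>d\<^sub>S(x)\<close>.\<close>

lemma dgcd_not_dvd_new_value:
  assumes "s \<in> S" and x: "x \<in> S" "0 < x" "x < s"
    and new: "\<forall>s'\<in>S. 0 < s' \<and> s' < s \<longrightarrow> dgcd S s \<noteq> dgcd S s'"
  shows "\<not> dgcd S x dvd s"
proof
  assume x_dvd: "dgcd S x dvd s"
  define u where "u = Max {y \<in> S. y < s}"
  have fin: "finite {y \<in> S. y < s}" by simp
  have "u \<in> {y \<in> S. y < s}"
    unfolding u_def using fin x by (intro Max_in) auto
  then have u: "u \<in> S" "u < s" by auto
  have u_max: "\<And>y. y \<in> S \<Longrightarrow> y < s \<Longrightarrow> y \<le> u"
    using Max_ge[OF fin] unfolding u_def by blast
  have "x \<le> u" using u_max x by simp
  have "{y \<in> S. y \<le> s} = insert s {y \<in> S. y \<le> u}"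
    using u_max u \<open>s \<in> S\<close> by (auto simp: order.order_iff_strict)
  then have "dgcd S s = gcd s (dgcd S u)"
    unfolding dgcd_def by simp
  also have "\<dots> = dgcd S u"
    using dvd_trans[OF dgcd_dvd_dgcd[OF \<open>x \<le> u\<close>] x_dvd] by (simp add: gcd_nat.absorb2)
  finally show False
    using new u \<open>x \<le> u\<close> x(2) by auto
qed

lemma numerical_semigroup_remove_new_value:
  assumes ns: "numerical_semigroup S" and "s \<in> S" "0 < s"
    and new: "\<forall>s'\<in>S. 0 < s' \<and> s' < s \<longrightarrow> dgcd S s \<noteq> dgcd S s'"
  shows "numerical_semigroup (S - {s})"
  unfolding numerical_semigroup_def
proof (intro conjI ballI)
  show "0 \<in> S - {s}" using ns \<open>0 < s\<close> unfolding numerical_semigroup_def by simp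
  have "UNIV - (S - {s}) = insert s (UNIV - S)" by auto
  then show "finite (UNIV - (S - {s}))" using ns unfolding numerical_semigroup_def by simp
next
  fix x y assume xy: "x \<in> S - {s}" "y \<in> S - {s}"
  have "x + y \<noteq> s"
  proof
    assume sum: "x + y = s"
    with xy have pos: "0 < x" "0 < y" by auto
    define m where "m = max x y"
    have "m \<in> S" "0 < m" "m < s"
      using xy pos sum unfolding m_def max_def by auto
    moreover have "dgcd S m dvd s"
      using dgcd_dvd[of x S m] dgcd_dvd[of y S m] xy sum unfolding m_def by auto
    ultimately show False
      using dgcd_not_dvd_new_value[OF \<open>s \<in> S\<close> _ _ _ new] by blast
  qed
  then show "x + y \<in> S - {s}"
    using xy ns unfolding numerical_semigroup_def by auto
qed

lemma saturated_remove_new_value: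
  assumes sat: "saturated S" and s: "s \<in> S" "0 < s"
    and new: "\<forall>s'\<in>S. 0 < s' \<and> s' < s \<longrightarrow> dgcd S s \<noteq> dgcd S s'"
  shows "saturated (S - {s})"
  unfolding saturated_def
proof (intro conjI ballI)
  show "numerical_semigroup (S - {s})"
    using sat s new numerical_semigroup_remove_new_value unfolding saturated_def by blast
next
  fix t assume "t \<in> S - {s} - {0}"
  then have t: "t \<in> S" "0 < t" "t \<noteq> s" by auto
  show "t + dgcd (S - {s}) t \<in> S - {s}"
  proof (cases "t < s")
    case True
    then have "{x \<in> S - {s}. x \<le> t} = {x \<in> S. x \<le> t}" by auto
    then have same: "dgcd (S - {s}) t = dgcd S t" unfolding dgcd_def by simp
    have "t + dgcd S t \<noteq> s"
      using dgcd_not_dvd_new_value[OF s(1) t(1,2) True new] dgcd_dvd[OF t(1) order_refl]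
      by auto
    then show ?thesis
      using sat t same unfolding saturated_def by auto
  next
    case False
    then have "s < t" using t(3) by simp
    have "t + dgcd (S - {s}) t \<in> S"
      using saturated_add_dvd[OF sat t(1,2)] dgcd_dvd_dgcd_subset[of "S - {s}" S t] by blast
    then show ?thesis using \<open>s < t\<close> by simp
  qed
qed

lemma frobenius_remove:
  assumes "finite (UNIV - S)" "UNIV - S \<noteq> {}" "s \<in> S"
  shows "frobenius (S - {s}) = max s (frobenius S)"
proof -
  have "UNIV - (S - {s}) = insert s (UNIV - S)" using assms(3) by auto
  then show ?thesis unfolding frobenius_def using assms(1,2) by simp
qed

lemma Sat_remove_new_value:
  assumes S: "S \<in> Sat F" and s: "s \<in> S" "0 < s" "s < F"
    and new: "\<forall>s'\<in>S. 0 < s' \<and> s' < s \<longrightarrow> dgcd S s \<noteq> dgcd S s'"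
  shows "S - {s} \<in> Sat F"
proof -
  have sat: "saturated S" and gaps: "UNIV - S \<noteq> {}" and "frobenius S = F"
    using S unfolding Sat_def by auto
  moreover have "finite (UNIV - S)"
    using sat unfolding saturated_def numerical_semigroup_def by simp
  ultimately have "frobenius (S - {s}) = F"
    using frobenius_remove s by simp
  then show ?thesis
    using saturated_remove_new_value[OF sat s(1,2) new] gaps unfolding Sat_def by auto
qed

lemma Sat_closure_subset: "T \<in> Sat F \<Longrightarrow> X \<subseteq> T \<Longrightarrow> Sat_closure F X \<subseteq> T"
  unfolding Sat_closure_def by blast

theorem lemma38:
  fixes F s :: nat and S X :: "nat set"
  assumes "F > 0"
    and "S \<in> Sat F"
    and "s \<in> S" and "0 < s" and "s < F"
    and "\<forall>s'\<in>S. 0 < s' \<and> s' < s \<longrightarrow> dgcd S s \<noteq> dgcd S s'"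
    and "Sat_set F X"
    and "Sat_closure F X = S"
  shows "s \<in> X"
proof (rule ccontr)
  assume "s \<notin> X"
  moreover have "X \<subseteq> S"
    using assms(2,8) unfolding Sat_closure_def by auto
  ultimately have "X \<subseteq> S - {s}" by auto
  then have "S \<subseteq> S - {s}"
    using Sat_closure_subset[OF Sat_remove_new_value[OF assms(2-6)]] assms(8) by blast
  then show False using assms(3) by blast
qed

end
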